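(* Consider an $M^{X}/G/1$ queue operating under the LCFS-p-repeat (with resampling) discipline, with Poisson batch arrivals of rate $\lambda$, i.i.d. batch sizes distributed as $X$ with mean $\mu$, i.i.d. service times distributed as $S$ (all independent), and stable, i.e. $E(e^{-\lambda S})>\mu/(\mu+1)$. Let $X_0$ be the number of customers in the first batch of a busy period, $M$ the maximum number of customers in the system during a busy period, and $M(k)$ a random variable distributed as $M$ conditionally on $X_0=k$. Let $T$ be exponential with rate $\lambda$, independent of $S$, and $I=1$ if $T<S$ and $I=0$ otherwise. Then for $k\geq 1$, $$M(k)=_d I\,M(k+X)+(1-I)\max\{k,M(k-1)\},$$ where $M(0)=0$, $I$, $X$ and $M(k-1)$ are mutually independent, and $M(k+X)$ is independent of $I$ and $M(k-1)$.
   Context: Under LCFS-p-repeat (with resampling), the customer who has been in the system the least amount of time is always served, newly arriving customers preempt the customer in service (customers within a batch are labeled arbitrarily and treated as arriving sequentially), service is non-idling, and a preempted service must be restarted from scratch when service recommences, with a new service time drawn independently from the distribution of $S$. $Y=_dZ$ denotes equality in distribution. *)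

theory Defs
  imports "HOL-Probability.Probability" "HOL-Library.Extended_Nat"
begin

text \<open>Sample-path construction of a busy period of the M^X/G/1 queue under
LCFS-p-repeat with resampling.  The busy period starts at time 0 with an
arrival of a batch of k customers.  Primitive random inputs:
  A j   : j-th interarrival time after the start of the busy period
          (arrival j happens at time A 0 + ... + A j),
  Xs j  : size of the batch arriving at arrival j,
  Ss i  : service time drawn for the i-th service attempt (each start or
          restart of a service draws a fresh sample).
After every event (arrival or departure) a fresh service attempt starts:
an arriving batch preempts the customer in service, and after a departure
the youngest remaining customer (re)starts its service from scratch.\<close>

definition arr_time :: "(nat \<Rightarrow> real) \<Rightarrow> nat \<Rightarrow> real" where
  "arr_time A j = (\<Sum>m\<le>j. A m)"

text \<open>State: (current event time t, number in system n, index i of the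
service attempt starting at t, index j of the next arrival).\<close>

definition queue_step ::
  "(nat \<Rightarrow> real) \<Rightarrow> (nat \<Rightarrow> nat) \<Rightarrow> (nat \<Rightarrow> real) \<Rightarrow>
   real \<times> nat \<times> nat \<times> nat \<Rightarrow> real \<times> nat \<times> nat \<times> nat" where
  "queue_step A Xs Ss st = (case st of (t, n, i, j) \<Rightarrow>
     if n = 0 then (t, n, i, j)
     else if arr_time A j < t + Ss i
       then (arr_time A j, n + Xs j, Suc i, Suc j)
       else (t + Ss i, n - 1, Suc i, j))"

definition queue_state ::
  "(nat \<Rightarrow> real) \<Rightarrow> (nat \<Rightarrow> nat) \<Rightarrow> (nat \<Rightarrow> real) \<Rightarrow> nat \<Rightarrow> nat \<Rightarrow>
   real \<times> nat \<times> nat \<times> nat" where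
  "queue_state A Xs Ss k m = (queue_step A Xs Ss ^^ m) (0, k, 0, 0)"

definition busy_max ::
  "(nat \<Rightarrow> real) \<Rightarrow> (nat \<Rightarrow> nat) \<Rightarrow> (nat \<Rightarrow> real) \<Rightarrow> nat \<Rightarrow> enat" where
  "busy_max A Xs Ss k = (SUP m. enat (fst (snd (queue_state A Xs Ss k m))))"

definition M_rv ::
  "(nat \<Rightarrow> 'w \<Rightarrow> real) \<Rightarrow> (nat \<Rightarrow> 'w \<Rightarrow> nat) \<Rightarrow> (nat \<Rightarrow> 'w \<Rightarrow> real) \<Rightarrow> nat \<Rightarrow> 'w \<Rightarrow> enat" where
  "M_rv A Xs Ss k \<omega> = busy_max (\<lambda>j. A j \<omega>) (\<lambda>j. Xs j \<omega>) (\<lambda>i. Ss i \<omega>) k"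

definition MXG1_input ::
  "'w measure \<Rightarrow> real \<Rightarrow> nat pmf \<Rightarrow> real measure \<Rightarrow>
   (nat \<Rightarrow> 'w \<Rightarrow> real) \<Rightarrow> (nat \<Rightarrow> 'w \<Rightarrow> nat) \<Rightarrow> (nat \<Rightarrow> 'w \<Rightarrow> real) \<Rightarrow> bool" where
  "MXG1_input \<Omega> lam X Sd A Xs Ss \<longleftrightarrow>
     prob_space \<Omega> \<and>
     (\<forall>j. distributed \<Omega> lborel (A j) (exponential_density lam)) \<and>
     (\<forall>j. Xs j \<in> measurable \<Omega> (count_space UNIV) \<and>
          distr \<Omega> (count_space UNIV) (Xs j) = measure_pmf X) \<and>
     (\<forall>i. Ss i \<in> borel_measurable \<Omega> \<and> distr \<Omega> borel (Ss i) = Sd) \<and>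
     prob_space.indep_vars \<Omega> (\<lambda>_. borel)
       (\<lambda>c \<omega>. case c of Inl (Inl j) \<Rightarrow> A j \<omega>
                        | Inl (Inr j) \<Rightarrow> real (Xs j \<omega>)
                        | Inr i \<Rightarrow> Ss i \<omega>) UNIV"

end

theory Submission
  imports Defs
begin

text \<open>Condition on the first event of the busy period.  If the next batch arrives before the
service in progress ends (probability \<open>P(T < S)\<close>), the preempted service is resampled, so
the rest of the busy period is one started by \<open>k + X\<close> customers, driven by the remaining,
fresh inputs.  Otherwise a customer departs, and by memorylessness the residual time to the
next arrival is again \<open>Exp(\<lambda>)\<close> and independent of everything else; the rest is a busy period
started by \<open>k - 1\<close> customers, and the maximum is at least \<open>k\<close>.  To make "fresh inputs"
precise, the inputs are transported to their canonical product space, where shifting the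
indices preserves the law, and the memoryless step is a Fubini computation on the two
coordinates involved.\<close>

section \<open>First-event decomposition of a sample path\<close>

lemma queue_step_shift:
  assumes "\<forall>j. arr_time A (j + dj) = arr_time A' j + c"
    and "\<forall>j. Xs (j + dj) = Xs' j" and "\<forall>i. Ss (i + di) = Ss' i"
  shows "queue_step A Xs Ss (t, n, i + di, j + dj) =
    (case queue_step A' Xs' Ss' (t - c, n, i, j) of
       (t', n', i', j') \<Rightarrow> (t' + c, n', i' + di, j' + dj))"
  using assms by (auto simp: queue_step_def)

lemma funpow_queue_step_shift:
  assumes "\<forall>j. arr_time A (j + dj) = arr_time A' j + c"
    and "\<forall>j. Xs (j + dj) = Xs' j" and "\<forall>i. Ss (i + di) = Ss' i"
  shows "(queue_step A Xs Ss ^^ m) (t, n, i + di, j + dj) =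
    (case (queue_step A' Xs' Ss' ^^ m) (t - c, n, i, j) of
       (t', n', i', j') \<Rightarrow> (t' + c, n', i' + di, j' + dj))"
proof (induction m)
  case 0
  then show ?case by simp
next
  case (Suc m)
  obtain t' n' i' j' where "(queue_step A' Xs' Ss' ^^ m) (t - c, n, i, j) = (t', n', i', j')"
    by (metis prod_cases4)
  with Suc show ?case
    using queue_step_shift[OF assms, of "t' + c" n' i' j'] by simp
qed

lemma busy_max_after_first_event:
  assumes "\<forall>j. arr_time A (j + dj) = arr_time A' j + c"
    and "\<forall>j. Xs (j + dj) = Xs' j" and "\<forall>i. Ss (i + di) = Ss' i"
    and first: "queue_step A Xs Ss (0, k, 0, 0) = (c, n, di, dj)"
  shows "busy_max A Xs Ss k = sup (enat k) (busy_max A' Xs' Ss' n)"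
proof -
  have later: "fst (snd (queue_state A Xs Ss k (Suc m))) = fst (snd (queue_state A' Xs' Ss' n m))"
    for m
  proof -
    have "queue_state A Xs Ss k (Suc m) = (queue_step A Xs Ss ^^ m) (c, n, 0 + di, 0 + dj)"
      unfolding queue_state_def using first by (simp add: funpow_Suc_right del: funpow.simps)
    also have "\<dots> = (case (queue_step A' Xs' Ss' ^^ m) (c - c, n, 0, 0) of
                       (t', n', i', j') \<Rightarrow> (t' + c, n', i' + di, j' + dj))"
      by (rule funpow_queue_step_shift[OF assms(1-3)])
    finally show ?thesis unfolding queue_state_def by (auto split: prod.splits)
  qed
  have "(UNIV :: nat set) = insert 0 (range Suc)"
    by (auto intro: nat.exhaust)
  then have "busy_max A Xs Ss k = sup (enat (fst (snd (queue_state A Xs Ss k 0))))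
              (SUP m. enat (fst (snd (queue_state A Xs Ss k (Suc m)))))"
    unfolding busy_max_def by (metis (no_types) SUP_insert image_image)
  then show ?thesis
    unfolding later by (simp add: busy_max_def queue_state_def)
qed

lemma arr_time_Suc: "arr_time A (Suc j) = A 0 + arr_time (\<lambda>j. A (Suc j)) j"
  unfolding arr_time_def by (rule sum.atMost_Suc_shift)

lemma arr_time_fun_upd_0: "arr_time (A(0 := A 0 - c)) j = arr_time A j - c"
proof -
  have "arr_time (A(0 := A 0 - c)) j = (\<Sum>m\<le>j. A m - (if m = 0 then c else 0))"
    unfolding arr_time_def by (intro sum.cong) auto
  then show ?thesis
    unfolding arr_time_def sum_subtractf by simp
qed

lemma busy_max_first_event:
  assumes "k \<ge> 1"
  shows "busy_max A Xs Ss k =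
    (if A 0 < Ss 0
     then busy_max (\<lambda>j. A (Suc j)) (\<lambda>j. Xs (Suc j)) (\<lambda>i. Ss (Suc i)) (k + Xs 0)
     else max (enat k) (busy_max (A(0 := A 0 - Ss 0)) Xs (\<lambda>i. Ss (Suc i)) (k - 1)))"
proof (cases "A 0 < Ss 0")
  case True
  have "queue_step A Xs Ss (0, k, 0, 0) = (A 0, k + Xs 0, 1, 1)"
    using assms True by (simp add: queue_step_def arr_time_def)
  then have "busy_max A Xs Ss k =
      sup (enat k) (busy_max (\<lambda>j. A (Suc j)) (\<lambda>j. Xs (Suc j)) (\<lambda>i. Ss (Suc i)) (k + Xs 0))"
    by (rule busy_max_after_first_event[rotated 3]) (auto simp: arr_time_Suc)
  moreover have "enat k \<le> busy_max (\<lambda>j. A (Suc j)) (\<lambda>j. Xs (Suc j)) (\<lambda>i. Ss (Suc i)) (k + Xs 0)"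
    unfolding busy_max_def by (rule SUP_upper2[where i=0]) (auto simp: queue_state_def)
  ultimately show ?thesis
    using True by (simp add: sup_absorb2)
next
  case False
  have "queue_step A Xs Ss (0, k, 0, 0) = (Ss 0, k - 1, 1, 0)"
    using assms False by (simp add: queue_step_def arr_time_def)
  then have "busy_max A Xs Ss k =
      sup (enat k) (busy_max (A(0 := A 0 - Ss 0)) Xs (\<lambda>i. Ss (Suc i)) (k - 1))"
    by (rule busy_max_after_first_event[rotated 3]) (auto simp: arr_time_fun_upd_0)
  then show ?thesis
    using False by (simp add: sup_max)
qed

section \<open>The canonical path space of the inputs\<close>

text \<open>Batch sizes are stored as reals so that one product of Borel spaces carries all inputs, as
in the independence clause of \<^const>\<open>MXG1_input\<close>.\<close>

type_synonym input_index = "(nat + nat) + nat"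

abbreviation path_space :: "(input_index \<Rightarrow> real) measure" where
  "path_space \<equiv> PiM UNIV (\<lambda>_. borel)"

definition path_arr :: "(input_index \<Rightarrow> real) \<Rightarrow> nat \<Rightarrow> real" where
  "path_arr z j = z (Inl (Inl j))"

definition path_batch :: "(input_index \<Rightarrow> real) \<Rightarrow> nat \<Rightarrow> nat" where
  "path_batch z j = nat \<lfloor>z (Inl (Inr j))\<rfloor>"

definition path_serv :: "(input_index \<Rightarrow> real) \<Rightarrow> nat \<Rightarrow> real" where
  "path_serv z i = z (Inr i)"

definition path_max :: "nat \<Rightarrow> (input_index \<Rightarrow> real) \<Rightarrow> enat" where
  "path_max k z = busy_max (path_arr z) (path_batch z) (path_serv z) k"

definition arr0 :: input_index where "arr0 = Inl (Inl 0)"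
definition batch0 :: input_index where "batch0 = Inl (Inr 0)"
definition serv0 :: input_index where "serv0 = Inr 0"

fun next_input :: "input_index \<Rightarrow> input_index" where
  "next_input (Inl (Inl j)) = Inl (Inl (Suc j))"
| "next_input (Inl (Inr j)) = Inl (Inr (Suc j))"
| "next_input (Inr i) = Inr (Suc i)"

fun next_service :: "input_index \<Rightarrow> input_index" where
  "next_service (Inr i) = Inr (Suc i)"
| "next_service c = c"

definition after_arrival :: "(input_index \<Rightarrow> real) \<Rightarrow> input_index \<Rightarrow> real" where
  "after_arrival z c = z (next_input c)"

definition after_departure :: "(input_index \<Rightarrow> real) \<Rightarrow> real \<Rightarrow> input_index \<Rightarrow> real" where
  "after_departure z u c = (if c = arr0 then u else z (next_service c))"

definition shift_services :: "(input_index \<Rightarrow> real) \<Rightarrow> input_index \<Rightarrow> real" where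
  "shift_services z = (\<lambda>c\<in>- {arr0}. z (next_service c))"

lemma arr0_ne_serv0: "arr0 \<noteq> serv0"
  by (simp add: arr0_def serv0_def)

lemma next_service_ne: "c \<noteq> arr0 \<Longrightarrow> next_service c \<noteq> arr0 \<and> next_service c \<noteq> serv0"
  by (cases c rule: next_service.cases) (auto simp: arr0_def serv0_def)

lemma inj_next_input: "inj next_input"
  by (rule injI) (elim next_input.elims; auto)

lemma inj_next_service: "inj next_service"
  by (rule injI) (elim next_service.elims; auto)

lemma after_departure_fun_upd_arr0_serv0:
  "after_departure (z(serv0 := s, arr0 := a)) u = after_departure z u"
  using next_service_ne by (auto simp: after_departure_def fun_eq_iff)

lemma after_departure_eq_fun_upd: "after_departure z u = (shift_services z)(arr0 := u)"
  by (auto simp: after_departure_def shift_services_def)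

lemma path_batch_0: "path_batch z 0 = nat \<lfloor>z batch0\<rfloor>"
  by (simp add: path_batch_def batch0_def)

lemma path_max_first_event:
  assumes "k \<ge> 1"
  shows "path_max k z =
    (if z arr0 < z serv0 then path_max (k + path_batch z 0) (after_arrival z)
     else max (enat k) (path_max (k - 1) (after_departure z (z arr0 - z serv0))))"
proof -
  have "path_arr (after_arrival z) = (\<lambda>j. path_arr z (Suc j))"
    "path_batch (after_arrival z) = (\<lambda>j. path_batch z (Suc j))"
    "path_serv (after_arrival z) = (\<lambda>i. path_serv z (Suc i))"
    by (auto simp: path_arr_def path_batch_def path_serv_def after_arrival_def)
  moreover have "path_arr (after_departure z (z arr0 - z serv0)) =
        (path_arr z)(0 := path_arr z 0 - path_serv z 0)"
    "path_batch (after_departure z u) = path_batch z"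
    "path_serv (after_departure z u) = (\<lambda>i. path_serv z (Suc i))" for u
    by (auto simp: path_arr_def path_batch_def path_serv_def after_departure_def arr0_def
        serv0_def fun_eq_iff)
  ultimately show ?thesis
    unfolding path_max_def busy_max_first_event[OF assms, of "path_arr z"]
    by (simp add: path_arr_def path_serv_def arr0_def serv0_def)
qed

lemma indicator_path_max_first_event:
  assumes "k \<ge> 1"
  shows "indicator {z. path_max k z \<in> B} z =
    (\<Sum>j. indicator {z. z arr0 < z serv0 \<and> path_batch z 0 = j \<and>
                        after_arrival z \<in> {z. path_max (k + j) z \<in> B}} z)
    + (if z serv0 \<le> z arr0
       then indicator {z. path_max (k - 1) z \<in> {m. max (enat k) m \<in> B}}
              (after_departure z (z arr0 - z serv0))
       else (0 :: ennreal))"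
proof (cases "z arr0 < z serv0")
  case True
  have "(\<Sum>j. indicator {z. z arr0 < z serv0 \<and> path_batch z 0 = j \<and>
                           after_arrival z \<in> {z. path_max (k + j) z \<in> B}} z :: ennreal) =
      indicator {z. path_max (k + path_batch z 0) (after_arrival z) \<in> B} z"
    by (rule sums_unique[symmetric], rule sums_single[THEN sums_cong[THEN iffD1, rotated]])
       (use True in \<open>auto simp: indicator_def\<close>)
  with True show ?thesis
    using path_max_first_event[OF assms, of z] by (simp add: indicator_def)
next
  case False
  then show ?thesis
    using path_max_first_event[OF assms, of z] by (simp add: indicator_def)
qed

lemma measurable_queue_state_path:
  fixes k m :: nat
  defines "q \<equiv> \<lambda>z. queue_state (path_arr z) (path_batch z) (path_serv z) k m"
  shows "(\<lambda>z. fst (q z)) \<in> borel_measurable path_space \<and>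
         (\<lambda>z. fst (snd (q z))) \<in> measurable path_space (count_space UNIV) \<and>
         (\<lambda>z. fst (snd (snd (q z)))) \<in> measurable path_space (count_space UNIV) \<and>
         (\<lambda>z. snd (snd (snd (q z)))) \<in> measurable path_space (count_space UNIV)"
  unfolding q_def
proof (induction m)
  case 0
  show ?case by (simp add: queue_state_def)
next
  case (Suc m)
  define t where "t z = fst (queue_state (path_arr z) (path_batch z) (path_serv z) k m)" for z
  define n where "n z = fst (snd (queue_state (path_arr z) (path_batch z) (path_serv z) k m))" for z
  define i where "i z = fst (snd (snd (queue_state (path_arr z) (path_batch z) (path_serv z) k m)))"
    for z
  define j where "j z = snd (snd (snd (queue_state (path_arr z) (path_batch z) (path_serv z) k m)))"
    for z
  have [measurable]: "t \<in> borel_measurable path_space"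
    "n \<in> measurable path_space (count_space UNIV)"
    "i \<in> measurable path_space (count_space UNIV)"
    "j \<in> measurable path_space (count_space UNIV)"
    using Suc unfolding t_def n_def i_def j_def by auto
  have [measurable]: "(\<lambda>z. arr_time (path_arr z) (j z)) \<in> borel_measurable path_space"
    by (rule measurable_compose_countable[where g=j]) (simp_all add: arr_time_def path_arr_def)
  have [measurable]: "(\<lambda>z. path_serv z (i z)) \<in> borel_measurable path_space"
    by (rule measurable_compose_countable[where g=i]) (simp_all add: path_serv_def)
  have [measurable]: "(\<lambda>z. path_batch z (j z)) \<in> measurable path_space (count_space UNIV)"
    by (rule measurable_compose_countable[where g=j]) (simp_all add: path_batch_def)
  have "queue_state (path_arr z) (path_batch z) (path_serv z) k (Suc m) =
        queue_step (path_arr z) (path_batch z) (path_serv z) (t z, n z, i z, j z)" for z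
    by (simp add: queue_state_def t_def n_def i_def j_def)
  then show ?case
    by (simp add: queue_step_def split del: if_split)
qed

lemma measurable_path_max: "path_max k \<in> measurable path_space (count_space UNIV)"
proof -
  have "(\<lambda>z. enat (fst (snd (queue_state (path_arr z) (path_batch z) (path_serv z) k m))))
          \<in> measurable path_space (count_space UNIV)" for m
    using measurable_compose[OF conjunct1[OF conjunct2[OF measurable_queue_state_path[of k m]]],
        of enat "count_space UNIV"] by simp
  then show ?thesis
    unfolding path_max_def[abs_def] busy_max_def by (intro measurable_SUP) auto
qed

lemma measurable_after_arrival: "after_arrival \<in> measurable path_space path_space"
  unfolding after_arrival_def[abs_def]
  by (intro measurable_PiM_single') (auto simp: space_PiM)

lemma measurable_after_departure_residual:
  "(\<lambda>u. after_departure Y u) \<in> measurable borel path_space"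
  unfolding after_departure_def[abs_def] by (intro measurable_PiM_single') (auto simp: space_PiM)

lemma measurable_after_first_departure:
  "(\<lambda>z. after_departure z (z arr0 - z serv0)) \<in> measurable path_space path_space"
  unfolding after_departure_def[abs_def] by (intro measurable_PiM_single') (auto simp: space_PiM)

definition input_path ::
  "(nat \<Rightarrow> 'w \<Rightarrow> real) \<Rightarrow> (nat \<Rightarrow> 'w \<Rightarrow> nat) \<Rightarrow> (nat \<Rightarrow> 'w \<Rightarrow> real) \<Rightarrow> 'w \<Rightarrow> input_index \<Rightarrow> real"
where
  "input_path A Xs Ss \<omega> c =
    (case c of Inl (Inl j) \<Rightarrow> A j \<omega> | Inl (Inr j) \<Rightarrow> real (Xs j \<omega>) | Inr i \<Rightarrow> Ss i \<omega>)"

lemma M_rv_eq_path_max: "M_rv A Xs Ss k \<omega> = path_max k (input_path A Xs Ss \<omega>)"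
  unfolding M_rv_def path_max_def
  by (simp add: path_arr_def[abs_def] path_batch_def[abs_def] path_serv_def[abs_def] input_path_def)

section \<open>Product measures and the exponential law\<close>

lemma measurable_fun_upd_pair:
  "(\<lambda>(Y, x). Y(i := x)) \<in> measurable (PiM J M \<Otimes>\<^sub>M M i) (PiM (insert i J) M)"
  using measurable_fun_upd[of "insert i J" J i fst "PiM J M \<Otimes>\<^sub>M M i" M snd]
  by (simp add: case_prod_beta')

lemma borel_measurable_nn_integral_fun_upd:
  assumes "sigma_finite_measure (M i)" and "f \<in> borel_measurable (PiM (insert i J) M)"
  shows "(\<lambda>Y. \<integral>\<^sup>+ x. f (Y(i := x)) \<partial>M i) \<in> borel_measurable (PiM J M)"
  using sigma_finite_measure.borel_measurable_nn_integral[OF assms(1),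
      of "\<lambda>Y x. f (Y(i := x))" "PiM J M"]
    measurable_compose[OF measurable_fun_upd_pair assms(2)]
  by (simp add: case_prod_beta')

lemma nn_integral_PiM_insert:
  assumes M: "\<And>j. prob_space (M j)" and "i \<notin> J"
    and f[measurable]: "f \<in> borel_measurable (PiM (insert i J) M)"
  shows "integral\<^sup>N (PiM (insert i J) M) f = (\<integral>\<^sup>+ Y. \<integral>\<^sup>+ x. f (Y(i := x)) \<partial>M i \<partial>PiM J M)"
proof -
  interpret Mi: prob_space "M i" by (rule M)
  interpret MJ: prob_space "PiM J M" by (rule prob_space_PiM) (rule M)
  interpret pair_sigma_finite "M i" "PiM J M" by unfold_locales
  have upd: "(\<lambda>(x, Y). Y(i := x)) \<in> measurable (M i \<Otimes>\<^sub>M PiM J M) (PiM (insert i J) M)"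
    using measurable_fun_upd[of "insert i J" J i snd "M i \<Otimes>\<^sub>M PiM J M" M fst]
    by (simp add: case_prod_beta')
  have "integral\<^sup>N (PiM (insert i J) M) f =
        integral\<^sup>N (distr (M i \<Otimes>\<^sub>M PiM J M) (PiM (insert i J) M) (\<lambda>(x, Y). Y(i := x))) f"
    by (subst distr_pair_PiM_eq_PiM) (auto simp: M)
  also have "\<dots> = (\<integral>\<^sup>+ p. f ((\<lambda>(x, Y). Y(i := x)) p) \<partial>(M i \<Otimes>\<^sub>M PiM J M))"
    by (rule nn_integral_distr[OF upd]) simp
  also have "\<dots> = (\<integral>\<^sup>+ Y. \<integral>\<^sup>+ x. f (Y(i := x)) \<partial>M i \<partial>PiM J M)"
    by (subst nn_integral_snd[symmetric])
       (auto intro!: measurable_compose[OF upd f] simp: case_prod_beta')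
  finally show ?thesis .
qed

lemma nn_integral_exponential_memoryless:
  assumes "s \<ge> 0" and [measurable]: "\<phi> \<in> borel_measurable borel"
  shows "(\<integral>\<^sup>+ a. indicator {s..} a * \<phi> (a - s) \<partial>density lborel (exponential_density l)) =
    ennreal (exp (- l * s)) * (\<integral>\<^sup>+ u. \<phi> u \<partial>density lborel (exponential_density l))"
proof -
  let ?f = "\<lambda>x. ennreal (exponential_density l x)"
  have "(\<integral>\<^sup>+ a. indicator {s..} a * \<phi> (a - s) \<partial>density lborel (exponential_density l)) =
        (\<integral>\<^sup>+ a. ?f a * (indicator {s..} a * \<phi> (a - s)) \<partial>lborel)"
    by (rule nn_integral_density) auto
  also have "\<dots> = (\<integral>\<^sup>+ u. ?f (s + u) * (indicator {s..} (s + u) * \<phi> (s + u - s)) \<partial>lborel)"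
    using nn_integral_real_affine[where c=1 and t=s
        and f="\<lambda>a. ?f a * (indicator {s..} a * \<phi> (a - s))"]
    by simp
  also have "\<dots> = (\<integral>\<^sup>+ u. ennreal (exp (- l * s)) * (?f u * \<phi> u) \<partial>lborel)"
  proof (intro nn_integral_cong)
    fix u :: real
    show "?f (s + u) * (indicator {s..} (s + u) * \<phi> (s + u - s)) =
          ennreal (exp (- l * s)) * (?f u * \<phi> u)"
    proof (cases "u < 0")
      case True
      then show ?thesis by (simp add: exponential_density_def indicator_def)
    next
      case False
      then have "exponential_density l (s + u) = exp (- l * s) * exponential_density l u"
        using assms by (simp add: exponential_density_def algebra_simps exp_add[symmetric])
      then show ?thesis
        using False assms by (simp add: indicator_def ennreal_mult' mult.assoc mult.left_commute)
    qed
  qed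
  also have "\<dots> = ennreal (exp (- l * s)) * (\<integral>\<^sup>+ u. ?f u * \<phi> u \<partial>lborel)"
    by (rule nn_integral_cmult) auto
  also have "(\<integral>\<^sup>+ u. ?f u * \<phi> u \<partial>lborel) = (\<integral>\<^sup>+ u. \<phi> u \<partial>density lborel (exponential_density l))"
    by (rule nn_integral_density[symmetric]) auto
  finally show ?thesis .
qed

lemma (in prob_space) emeasure_indep_var_Int:
  assumes "indep_var S X T Y" and "A \<in> sets S" and "B \<in> sets T"
  shows "emeasure M {\<omega> \<in> space M. X \<omega> \<in> A \<and> Y \<omega> \<in> B} =
    emeasure M {\<omega> \<in> space M. X \<omega> \<in> A} * emeasure M {\<omega> \<in> space M. Y \<omega> \<in> B}"
  using indep_varD[OF assms]
  by (simp add: emeasure_eq_measure ennreal_mult vimage_def Int_def conj_commute)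

lemma (in prob_space) emeasure_indep_vars_Int:
  assumes "indep_vars M' X J" and "i \<in> J" "j \<in> J" "i \<noteq> j"
    and "A \<in> sets (M' i)" and "B \<in> sets (M' j)"
  shows "emeasure M {\<omega> \<in> space M. X i \<omega> \<in> A \<and> X j \<omega> \<in> B} =
    emeasure M {\<omega> \<in> space M. X i \<omega> \<in> A} * emeasure M {\<omega> \<in> space M. X j \<omega> \<in> B}"
proof -
  have "prob (\<Inter>l\<in>{i, j}. X l -` (if l = i then A else B) \<inter> space M) =
      (\<Prod>l\<in>{i, j}. prob (X l -` (if l = i then A else B) \<inter> space M))"
    using assms by (intro indep_varsD[OF assms(1)]) auto
  moreover have "(\<Inter>l\<in>{i, j}. X l -` (if l = i then A else B) \<inter> space M) =
      {\<omega> \<in> space M. X i \<omega> \<in> A \<and> X j \<omega> \<in> B}"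
    using assms(4) by auto
  ultimately show ?thesis
    using assms(4) by (simp add: emeasure_eq_measure ennreal_mult vimage_def Int_def conj_commute)
qed

lemma emeasure_eq_suminf_fibers:
  fixes Y :: "'a \<Rightarrow> nat"
  assumes "Y \<in> measurable M (count_space UNIV)" and "U \<in> measurable M (count_space UNIV)"
  shows "emeasure M {\<omega> \<in> space M. U \<omega> \<in> B} = (\<Sum>j. emeasure M {\<omega> \<in> space M. Y \<omega> = j \<and> U \<omega> \<in> B})"
proof -
  have "{\<omega> \<in> space M. Y \<omega> = j \<and> U \<omega> \<in> B} = (Y -` {j} \<inter> space M) \<inter> (U -` B \<inter> space M)" for j
    by auto
  then have "(\<Sum>j. emeasure M {\<omega> \<in> space M. Y \<omega> = j \<and> U \<omega> \<in> B}) =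
      emeasure M (\<Union>j. {\<omega> \<in> space M. Y \<omega> = j \<and> U \<omega> \<in> B})"
    using measurable_sets[OF assms(1)] measurable_sets[OF assms(2)]
    by (intro suminf_emeasure) (auto simp: disjoint_family_on_def)
  also have "(\<Union>j. {\<omega> \<in> space M. Y \<omega> = j \<and> U \<omega> \<in> B}) = {\<omega> \<in> space M. U \<omega> \<in> B}"
    by auto
  finally show ?thesis ..
qed

section \<open>The law of the inputs on the path space\<close>

locale MXG1_law =
  fixes lam :: real and X :: "nat pmf" and Sd :: "real measure"
  assumes lam_pos: "lam > 0" and Sd_prob: "prob_space Sd" and Sd_sets: "sets Sd = sets borel"
    and S_nonneg: "AE s in Sd. s \<ge> 0"
begin

definition exp_law :: "real measure" where
  "exp_law = density lborel (exponential_density lam)"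

definition input_law :: "input_index \<Rightarrow> real measure" where
  "input_law c = (case c of
      Inl (Inl _) \<Rightarrow> exp_law
    | Inl (Inr _) \<Rightarrow> distr (measure_pmf X) borel real
    | Inr _ \<Rightarrow> Sd)"

definition path_law :: "(input_index \<Rightarrow> real) measure" where
  "path_law = PiM UNIV input_law"

definition service_first_prob :: ennreal where
  "service_first_prob = (\<integral>\<^sup>+ s. ennreal (exp (- lam * s)) \<partial>Sd)"

lemma prob_space_exp_law: "prob_space exp_law"
  unfolding exp_law_def by (rule prob_space_exponential_density[OF lam_pos])

lemma distributed_exponentialD:
  assumes "distributed M lborel T (exponential_density lam)"
  shows "T \<in> borel_measurable M" and "distr M borel T = exp_law"
proof -
  show "T \<in> borel_measurable M"
    using distributed_measurable[OF assms] by (simp add: measurable_cong_sets[OF refl sets_lborel])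
  have "distr M borel T = distr M lborel T"
    by (rule distr_cong) auto
  then show "distr M borel T = exp_law"
    using distributed_distr_eq_density[OF assms] by (simp add: exp_law_def)
qed

lemma prob_space_input_law: "prob_space (input_law c)"
  using prob_space_exp_law Sd_prob prob_space.prob_space_distr[OF prob_space_measure_pmf, of real X]
  by (auto simp: input_law_def split: sum.split)

lemma sets_input_law: "sets (input_law c) = sets borel"
  using Sd_sets by (auto simp: input_law_def exp_law_def split: sum.split)

lemma space_input_law: "space (input_law c) = UNIV"
  using sets_eq_imp_space_eq[OF sets_input_law] by simp

lemma input_law_next_input: "input_law (next_input c) = input_law c"
  by (cases c rule: next_input.cases) (auto simp: input_law_def)

lemma input_law_next_service: "input_law (next_service c) = input_law c"
  by (cases c rule: next_service.cases) (auto simp: input_law_def)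

lemma input_law_arr0: "input_law arr0 = exp_law"
  and input_law_serv0: "input_law serv0 = Sd"
  by (simp_all add: input_law_def arr0_def serv0_def)

sublocale path: product_prob_space input_law UNIV
  by (simp add: product_prob_space_def product_prob_space_axioms_def product_sigma_finite_def
      prob_space_imp_sigma_finite prob_space_input_law)

lemma prob_space_path_law: "prob_space path_law"
  unfolding path_law_def by (rule path.prob_space_axioms)

lemma sets_PiM_input_law: "sets (PiM J input_law) = sets (PiM J (\<lambda>_. borel))"
  by (rule sets_PiM_cong) (auto simp: sets_input_law)

lemma measurable_path_law_iff: "measurable path_law N = measurable path_space N"
  unfolding path_law_def by (rule measurable_cong_sets[OF sets_PiM_input_law refl])

lemma measurable_PiM_input_law_iff:
  "measurable (PiM J input_law) N = measurable (PiM J (\<lambda>_. borel)) N"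
  by (rule measurable_cong_sets[OF sets_PiM_input_law refl])

lemma measurable_path_law_path_law:
  "measurable path_law path_law = measurable path_space path_space"
  unfolding path_law_def by (rule measurable_cong_sets[OF sets_PiM_input_law sets_PiM_input_law])

lemma space_path_law: "space path_law = UNIV"
  by (simp add: path_law_def space_PiM sets_eq_imp_space_eq[OF sets_input_law])

lemma sets_path_law: "sets path_law = sets path_space"
  by (simp add: path_law_def sets_PiM_input_law)

lemma distr_after_arrival: "distr path_law path_law after_arrival = path_law"
proof -
  have "distr (PiM UNIV input_law) (PiM UNIV (\<lambda>c. input_law (next_input c)))
          (\<lambda>z. \<lambda>c\<in>UNIV. z (next_input c)) = PiM UNIV (\<lambda>c. input_law (next_input c))"
    by (rule distr_PiM_reindex) (auto simp: prob_space_input_law inj_next_input)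
  moreover have "(\<lambda>z. \<lambda>c\<in>UNIV. z (next_input c)) = after_arrival"
    by (auto simp: after_arrival_def[abs_def] restrict_def)
  ultimately show ?thesis
    by (simp add: path_law_def input_law_next_input)
qed

lemma measurable_shift_services:
  "shift_services \<in> measurable (PiM (- {arr0, serv0}) input_law) (PiM (- {arr0}) input_law)"
  unfolding shift_services_def
proof (rule measurable_restrict)
  fix c :: input_index
  assume "c \<in> - {arr0}"
  with next_service_ne have "next_service c \<in> - {arr0, serv0}"
    by auto
  from measurable_component_singleton[OF this, of input_law]
  show "(\<lambda>Y. Y (next_service c)) \<in> measurable (PiM (- {arr0, serv0}) input_law) (input_law c)"
    by (simp add: input_law_next_service)
qed

lemma distr_shift_services:
  "distr (PiM (- {arr0, serv0}) input_law) (PiM (- {arr0}) input_law) shift_services =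
    PiM (- {arr0}) input_law"
proof -
  have "distr (PiM (- {arr0, serv0}) input_law) (PiM (- {arr0}) (\<lambda>c. input_law (next_service c)))
      shift_services = PiM (- {arr0}) (\<lambda>c. input_law (next_service c))"
    unfolding shift_services_def using next_service_ne
    by (intro distr_PiM_reindex inj_on_subset[OF inj_next_service]) (auto simp: prob_space_input_law)
  then show ?thesis
    by (simp add: input_law_next_service)
qed

lemma path_law_indep_restrict:
  assumes "A \<inter> B = {}" and U: "U \<in> sets (PiM A (\<lambda>_. borel))" and V: "V \<in> sets (PiM B (\<lambda>_. borel))"
  shows "emeasure path_law {z. restrict z A \<in> U \<and> restrict z B \<in> V} =
         emeasure path_law {z. restrict z A \<in> U} * emeasure path_law {z. restrict z B \<in> V}"
proof -
  interpret prob_space path_law by (rule prob_space_path_law)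
  have "indep_vars input_law (\<lambda>c z. z c) UNIV"
  proof -
    have "(\<lambda>c. distr path_law (input_law c) (\<lambda>z. z c)) = input_law"
      by (simp add: path_law_def path.PiM_component)
    then show ?thesis
      by (subst indep_vars_iff_distr_eq_PiM) (auto simp: path_law_def restrict_UNIV)
  qed
  then have "indep_var (PiM A input_law) (\<lambda>z. restrict z A) (PiM B input_law) (\<lambda>z. restrict z B)"
    using indep_var_restrict[of input_law "\<lambda>c z. z c" UNIV A B] assms(1) by simp
  from indep_varD[OF this, of U V] U V show ?thesis
    by (simp add: sets_PiM_input_law emeasure_eq_measure ennreal_mult vimage_def space_path_law)
qed

lemma emeasure_path_law_coord:
  assumes "W \<in> sets borel"
  shows "emeasure path_law {z. z c \<in> W} = emeasure (input_law c) W"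
proof -
  have "emeasure (input_law c) W = emeasure (distr path_law (input_law c) (\<lambda>z. z c)) W"
    by (simp add: path_law_def path.PiM_component)
  also have "\<dots> = emeasure path_law {z. z c \<in> W}"
    using assms by (subst emeasure_distr) (auto simp: path_law_def sets_input_law space_PiM
        space_input_law intro!: arg_cong[where f="emeasure _"])
  finally show ?thesis ..
qed

lemma emeasure_path_batch0: "emeasure path_law {z. path_batch z 0 = j} = pmf X j"
proof -
  have W: "{r::real. nat \<lfloor>r\<rfloor> = j} \<in> sets borel"
    by measurable
  have "emeasure path_law {z. path_batch z 0 = j} = emeasure path_law {z. z batch0 \<in> {r. nat \<lfloor>r\<rfloor> = j}}"
    by (simp add: path_batch_0)
  also have "\<dots> = emeasure (distr (measure_pmf X) borel real) {r. nat \<lfloor>r\<rfloor> = j}"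
    by (subst emeasure_path_law_coord[OF W]) (simp add: input_law_def batch0_def)
  also have "\<dots> = emeasure (measure_pmf X) (real -` {r::real. nat \<lfloor>r\<rfloor> = j})"
    using W by (simp add: emeasure_distr)
  also have "real -` {r::real. nat \<lfloor>r\<rfloor> = j} = {j}"
    by auto
  finally show ?thesis
    by (simp add: emeasure_pmf_single)
qed

section \<open>Conditioning on the first event\<close>

lemma emeasure_after_arrival_indep:
  assumes W: "W \<in> sets path_space"
  shows "emeasure path_law {z. z arr0 < z serv0 \<and> path_batch z 0 = j \<and> after_arrival z \<in> W} =
         emeasure path_law {z. z arr0 < z serv0 \<and> path_batch z 0 = j} * emeasure path_law W"
proof -
  let ?borel = "\<lambda>_. borel :: real measure"
  define A where "A = {arr0, serv0, batch0}"
  define B where "B = range next_input"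
  have "next_input c \<notin> A" for c
    by (cases c rule: next_input.cases) (auto simp: A_def arr0_def serv0_def batch0_def)
  then have AB: "A \<inter> B = {}"
    by (auto simp: B_def)
  define U where "U = {y \<in> space (PiM A ?borel). y arr0 < y serv0 \<and> nat \<lfloor>y batch0\<rfloor> = j}"
  define V where "V = {y \<in> space (PiM B ?borel). (\<lambda>c. y (next_input c)) \<in> W}"
  have [simp]: "arr0 \<in> A" "serv0 \<in> A" "batch0 \<in> A" "next_input c \<in> B" for c
    by (auto simp: A_def B_def)
  have U: "U \<in> sets (PiM A ?borel)"
    unfolding U_def by measurable
  have "(\<lambda>y c. y (next_input c)) \<in> measurable (PiM B ?borel) path_space"
    by (rule measurable_PiM_single') (auto simp: space_PiM)
  from measurable_sets[OF this W] have V: "V \<in> sets (PiM B ?borel)"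
    by (simp add: V_def vimage_def Int_def conj_commute)
  have "{z. restrict z B \<in> V} = after_arrival -` W \<inter> space path_law"
    by (auto simp: V_def space_PiM space_path_law after_arrival_def[abs_def])
  also have "emeasure path_law \<dots> = emeasure (distr path_law path_law after_arrival) W"
    using measurable_after_arrival W
    by (intro emeasure_distr[symmetric]) (simp_all add: sets_path_law measurable_path_law_path_law)
  finally have "emeasure path_law {z. restrict z B \<in> V} = emeasure path_law W"
    by (simp add: distr_after_arrival)
  moreover have "{z. restrict z A \<in> U \<and> restrict z B \<in> V} =
      {z. z arr0 < z serv0 \<and> path_batch z 0 = j \<and> after_arrival z \<in> W}"
    by (auto simp: U_def V_def space_PiM path_batch_0 after_arrival_def[abs_def])
  moreover have "{z. restrict z A \<in> U} = {z. z arr0 < z serv0 \<and> path_batch z 0 = j}"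
    by (auto simp: U_def space_PiM path_batch_0)
  ultimately show ?thesis
    using path_law_indep_restrict[OF AB U V] by simp
qed

lemma nn_integral_path_law_arr0_serv0:
  assumes f: "f \<in> borel_measurable path_space"
  shows "integral\<^sup>N path_law f =
    (\<integral>\<^sup>+ Y. \<integral>\<^sup>+ s. \<integral>\<^sup>+ a. f (Y(serv0 := s, arr0 := a)) \<partial>exp_law \<partial>Sd \<partial>PiM (- {arr0, serv0}) input_law)"
proof -
  define R where "R = - {arr0, serv0}"
  have R: "insert arr0 (insert serv0 R) = UNIV" "arr0 \<notin> insert serv0 R" "serv0 \<notin> R"
    using arr0_ne_serv0 by (auto simp: R_def)
  define g where "g = (\<lambda>Y. \<integral>\<^sup>+ a. f (Y(arr0 := a)) \<partial>exp_law)"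
  have f': "f \<in> borel_measurable (PiM (insert arr0 (insert serv0 R)) input_law)"
    using f by (simp add: R(1) measurable_PiM_input_law_iff)
  have "integral\<^sup>N path_law f = (\<integral>\<^sup>+ Y. g Y \<partial>PiM (insert serv0 R) input_law)"
    using nn_integral_PiM_insert[OF prob_space_input_law R(2) f']
    by (simp add: path_law_def R(1) g_def input_law_arr0)
  also have "\<dots> = (\<integral>\<^sup>+ Y. \<integral>\<^sup>+ s. g (Y(serv0 := s)) \<partial>Sd \<partial>PiM R input_law)"
  proof -
    have "g \<in> borel_measurable (PiM (insert serv0 R) input_law)"
      using borel_measurable_nn_integral_fun_upd[of input_law arr0 f "insert serv0 R",
          OF prob_space_imp_sigma_finite[OF prob_space_input_law] f']
      by (simp add: g_def input_law_arr0)
    from nn_integral_PiM_insert[OF prob_space_input_law R(3) this] show ?thesis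
      by (simp add: input_law_serv0)
  qed
  finally show ?thesis
    by (simp add: g_def R_def)
qed

lemma nn_integral_after_departure:
  assumes g: "g \<in> borel_measurable path_space"
  shows "(\<lambda>Y. \<integral>\<^sup>+ u. g (after_departure Y u) \<partial>exp_law) \<in> borel_measurable (PiM (- {arr0, serv0}) input_law)"
    and "(\<integral>\<^sup>+ Y. \<integral>\<^sup>+ u. g (after_departure Y u) \<partial>exp_law \<partial>PiM (- {arr0, serv0}) input_law) =
      integral\<^sup>N path_law g"
proof -
  define F where "F = (\<lambda>Y. \<integral>\<^sup>+ u. g (Y(arr0 := u)) \<partial>exp_law)"
  have "insert arr0 (- {arr0}) = UNIV"
    by auto
  then have g': "g \<in> borel_measurable (PiM (insert arr0 (- {arr0})) input_law)"
    using g by (simp add: measurable_PiM_input_law_iff)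
  have F: "F \<in> borel_measurable (PiM (- {arr0}) input_law)"
    using borel_measurable_nn_integral_fun_upd[of input_law arr0 g,
        OF prob_space_imp_sigma_finite[OF prob_space_input_law] g']
    by (simp add: F_def input_law_arr0)
  have after_departure: "(\<lambda>Y. \<integral>\<^sup>+ u. g (after_departure Y u) \<partial>exp_law) = F \<circ> shift_services"
    by (simp add: F_def after_departure_eq_fun_upd comp_def)
  show "(\<lambda>Y. \<integral>\<^sup>+ u. g (after_departure Y u) \<partial>exp_law) \<in> borel_measurable (PiM (- {arr0, serv0}) input_law)"
    unfolding after_departure by (rule measurable_comp[OF measurable_shift_services F])
  have "(\<integral>\<^sup>+ Y. F (shift_services Y) \<partial>PiM (- {arr0, serv0}) input_law) =
      integral\<^sup>N (PiM (- {arr0}) input_law) F"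
    using nn_integral_distr[OF measurable_shift_services, of F] F by (simp add: distr_shift_services)
  also have "\<dots> = integral\<^sup>N path_law g"
    using nn_integral_PiM_insert[OF prob_space_input_law _ g'] \<open>insert arr0 (- {arr0}) = UNIV\<close>
    by (simp add: F_def path_law_def input_law_arr0)
  finally show "(\<integral>\<^sup>+ Y. \<integral>\<^sup>+ u. g (after_departure Y u) \<partial>exp_law \<partial>PiM (- {arr0, serv0}) input_law) =
      integral\<^sup>N path_law g"
    using after_departure by (simp add: comp_def)
qed

lemma nn_integral_service_first:
  assumes g: "g \<in> borel_measurable path_space"
  shows "(\<integral>\<^sup>+ z. (if z serv0 \<le> z arr0 then g (after_departure z (z arr0 - z serv0)) else 0) \<partial>path_law) =
    service_first_prob * integral\<^sup>N path_law g"
proof -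
  define h where "h z = (if z serv0 \<le> z arr0 then g (after_departure z (z arr0 - z serv0)) else 0)" for z
  define \<phi> where "\<phi> Y = (\<integral>\<^sup>+ u. g (after_departure Y u) \<partial>exp_law)" for Y
  have [measurable]: "(\<lambda>z. g (after_departure z (z arr0 - z serv0))) \<in> borel_measurable path_space"
    using measurable_comp[OF measurable_after_first_departure g] by (simp add: comp_def)
  have "h \<in> borel_measurable path_space"
    unfolding h_def by measurable
  then have "integral\<^sup>N path_law h =
    (\<integral>\<^sup>+ Y. \<integral>\<^sup>+ s. \<integral>\<^sup>+ a. h (Y(serv0 := s, arr0 := a)) \<partial>exp_law \<partial>Sd \<partial>PiM (- {arr0, serv0}) input_law)"
    by (rule nn_integral_path_law_arr0_serv0)
  also have "\<dots> = (\<integral>\<^sup>+ Y. \<integral>\<^sup>+ s. ennreal (exp (- lam * s)) * \<phi> Y \<partial>Sd \<partial>PiM (- {arr0, serv0}) input_law)"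
  proof (rule nn_integral_cong)
    fix Y :: "input_index \<Rightarrow> real"
    have "(\<lambda>u. g (after_departure Y u)) \<in> borel_measurable borel"
      using measurable_comp[OF measurable_after_departure_residual g] by (simp add: comp_def)
    note memoryless = nn_integral_exponential_memoryless[OF _ this]
    show "(\<integral>\<^sup>+ s. \<integral>\<^sup>+ a. h (Y(serv0 := s, arr0 := a)) \<partial>exp_law \<partial>Sd) =
        (\<integral>\<^sup>+ s. ennreal (exp (- lam * s)) * \<phi> Y \<partial>Sd)"
    proof (rule nn_integral_cong_AE, rule eventually_mono[OF S_nonneg])
      fix s :: real
      assume "0 \<le> s"
      have "h (Y(serv0 := s, arr0 := a)) = indicator {s..} a * g (after_departure Y (a - s))" for a
        using arr0_ne_serv0 by (simp add: h_def after_departure_fun_upd_arr0_serv0 indicator_def)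
      with memoryless[OF \<open>0 \<le> s\<close>]
      show "(\<integral>\<^sup>+ a. h (Y(serv0 := s, arr0 := a)) \<partial>exp_law) = ennreal (exp (- lam * s)) * \<phi> Y"
        by (simp add: \<phi>_def exp_law_def)
    qed
  qed
  also have "\<dots> = (\<integral>\<^sup>+ Y. service_first_prob * \<phi> Y \<partial>PiM (- {arr0, serv0}) input_law)"
    unfolding service_first_prob_def
    by (intro nn_integral_cong nn_integral_multc) (simp add: measurable_cong_sets[OF Sd_sets refl])
  also have "\<dots> = service_first_prob * integral\<^sup>N (PiM (- {arr0, serv0}) input_law) \<phi>"
    unfolding \<phi>_def by (rule nn_integral_cmult[OF nn_integral_after_departure(1)[OF g]])
  also have "integral\<^sup>N (PiM (- {arr0, serv0}) input_law) \<phi> = integral\<^sup>N path_law g"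
    unfolding \<phi>_def by (rule nn_integral_after_departure(2)[OF g])
  finally show ?thesis
    by (simp add: h_def)
qed

lemma sets_service_first: "{z. z serv0 \<le> z arr0} \<in> sets path_law"
proof -
  have "{z \<in> space path_space. z serv0 \<le> z arr0} \<in> sets path_space"
    by measurable
  then show ?thesis
    by (simp add: sets_path_law space_PiM)
qed

lemma emeasure_service_first_path:
  "emeasure path_law {z. z serv0 \<le> z arr0} = service_first_prob"
proof -
  interpret prob_space path_law
    by (rule prob_space_path_law)
  have "emeasure path_law {z. z serv0 \<le> z arr0} =
      (\<integral>\<^sup>+ z. (if z serv0 \<le> z arr0 then 1 else 0) \<partial>path_law)"
    by (subst nn_integral_indicator[OF sets_service_first, symmetric])
       (auto simp: indicator_def intro!: nn_integral_cong)
  also have "\<dots> = service_first_prob"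
    using nn_integral_service_first[of "\<lambda>_. 1"] by (simp add: emeasure_space_1)
  finally show ?thesis .
qed

lemma emeasure_arrival_first_path:
  "emeasure path_law {z. z arr0 < z serv0} = 1 - service_first_prob"
proof -
  interpret prob_space path_law
    by (rule prob_space_path_law)
  have "space path_law - {z. z serv0 \<le> z arr0} = {z. z arr0 < z serv0}"
    by (auto simp: space_path_law)
  moreover have "service_first_prob \<noteq> \<top>"
    using emeasure_finite[of "{z. z serv0 \<le> z arr0}"] by (simp add: emeasure_service_first_path)
  ultimately show ?thesis
    using emeasure_compl[OF sets_service_first]
    by (simp add: emeasure_space_1 emeasure_service_first_path)
qed

lemma emeasure_arrival_first_batch:
  "emeasure path_law {z. z arr0 < z serv0 \<and> path_batch z 0 = j} = (1 - service_first_prob) * pmf X j"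
proof -
  let ?borel = "\<lambda>_. borel :: real measure"
  define A where "A = {arr0, serv0}"
  define B where "B = {batch0}"
  have AB: "A \<inter> B = {}"
    by (auto simp: A_def B_def arr0_def serv0_def batch0_def)
  define U where "U = {y \<in> space (PiM A ?borel). y arr0 < y serv0}"
  define V where "V = {y \<in> space (PiM B ?borel). nat \<lfloor>y batch0\<rfloor> = j}"
  have [simp]: "arr0 \<in> A" "serv0 \<in> A" "batch0 \<in> B"
    by (auto simp: A_def B_def)
  have UV: "U \<in> sets (PiM A ?borel)" "V \<in> sets (PiM B ?borel)"
    unfolding U_def V_def by measurable
  moreover have "{z. restrict z A \<in> U \<and> restrict z B \<in> V} =
      {z. z arr0 < z serv0 \<and> path_batch z 0 = j}"
    "{z. restrict z A \<in> U} = {z. z arr0 < z serv0}"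
    "{z. restrict z B \<in> V} = {z. path_batch z 0 = j}"
    by (auto simp: U_def V_def space_PiM path_batch_0)
  ultimately show ?thesis
    using path_law_indep_restrict[OF AB UV]
    by (simp add: emeasure_path_batch0 emeasure_arrival_first_path)
qed

lemma sets_path_max: "{z. path_max m z \<in> B} \<in> sets path_law"
  using measurable_sets[OF measurable_path_max, of B m]
  by (simp add: sets_path_law space_PiM vimage_def)

lemma sets_arrival_first:
  assumes "W \<in> sets path_space"
  shows "{z. z arr0 < z serv0 \<and> path_batch z 0 = j \<and> after_arrival z \<in> W} \<in> sets path_law"
proof -
  have [measurable]: "(\<lambda>z. path_batch z 0) \<in> measurable path_space (count_space UNIV)"
    unfolding path_batch_def by measurable
  have [measurable]: "Measurable.pred path_space (\<lambda>z. after_arrival z \<in> W)"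
    using measurable_sets[OF measurable_after_arrival assms]
    by (simp add: pred_def vimage_def Int_def conj_commute)
  have "{z \<in> space path_space. z arr0 < z serv0 \<and> path_batch z 0 = j \<and> after_arrival z \<in> W}
      \<in> sets path_space"
    by measurable
  then show ?thesis
    by (simp add: sets_path_law space_PiM)
qed

lemma path_max_law_recursion:
  assumes "k \<ge> 1"
  shows "emeasure path_law {z. path_max k z \<in> B} =
    (1 - service_first_prob) * (\<Sum>j. pmf X j * emeasure path_law {z. path_max (k + j) z \<in> B})
    + service_first_prob * emeasure path_law {z. path_max (k - 1) z \<in> {m. max (enat k) m \<in> B}}"
proof -
  define B' where "B' = {m. max (enat k) m \<in> B}"
  define E where "E j = {z. z arr0 < z serv0 \<and> path_batch z 0 = j \<and>
                         after_arrival z \<in> {z. path_max (k + j) z \<in> B}}" for j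
  define g :: "(input_index \<Rightarrow> real) \<Rightarrow> ennreal" where
    "g = indicator {z. path_max (k - 1) z \<in> B'}"
  have E: "E j \<in> sets path_law" for j
    unfolding E_def using sets_path_max by (intro sets_arrival_first) (simp add: sets_path_law)
  have g: "g \<in> borel_measurable path_space"
    using sets_path_max by (simp add: g_def sets_path_law)
  then have [measurable]: "(\<lambda>z. g (after_departure z (z arr0 - z serv0))) \<in> borel_measurable path_space"
    using measurable_comp[OF measurable_after_first_departure] by (simp add: comp_def)
  have "emeasure path_law {z. path_max k z \<in> B} =
      (\<integral>\<^sup>+ z. (\<Sum>j. indicator (E j) z) +
         (if z serv0 \<le> z arr0 then g (after_departure z (z arr0 - z serv0)) else 0) \<partial>path_law)"
    unfolding E_def g_def B'_def indicator_path_max_first_event[OF assms, symmetric]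
    by (rule nn_integral_indicator[OF sets_path_max, symmetric])
  also have "\<dots> = (\<Sum>j. emeasure path_law (E j)) + service_first_prob * integral\<^sup>N path_law g"
  proof (subst nn_integral_add)
    show "(\<lambda>z. \<Sum>j. indicator (E j) z :: ennreal) \<in> borel_measurable path_law"
      using E by measurable
    show "(\<lambda>z. if z serv0 \<le> z arr0 then g (after_departure z (z arr0 - z serv0)) else 0)
        \<in> borel_measurable path_law"
      unfolding measurable_path_law_iff by measurable
  qed (use E in \<open>simp_all add: nn_integral_suminf nn_integral_service_first[OF g]\<close>)
  also have "(\<Sum>j. emeasure path_law (E j)) =
      (1 - service_first_prob) * (\<Sum>j. pmf X j * emeasure path_law {z. path_max (k + j) z \<in> B})"
    unfolding E_def emeasure_after_arrival_indep[OF sets_path_max[unfolded sets_path_law]]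
      emeasure_arrival_first_batch
    by (simp add: mult.assoc ennreal_suminf_cmult)
  also have "integral\<^sup>N path_law g = emeasure path_law {z. path_max (k - 1) z \<in> B'}"
    unfolding g_def by (rule nn_integral_indicator[OF sets_path_max])
  finally show ?thesis
    by (simp add: B'_def)
qed

section \<open>The two sides of the identity\<close>

lemma input_path_coord:
  assumes "MXG1_input \<Omega> lam X Sd A Xs Ss"
  shows "(\<lambda>\<omega>. input_path A Xs Ss \<omega> c) \<in> borel_measurable \<Omega>"
    and "distr \<Omega> borel (\<lambda>\<omega>. input_path A Xs Ss \<omega> c) = input_law c"
proof -
  have A: "\<And>j. distributed \<Omega> lborel (A j) (exponential_density lam)"
    and Xs: "\<And>j. Xs j \<in> measurable \<Omega> (count_space UNIV)"
      "\<And>j. distr \<Omega> (count_space UNIV) (Xs j) = measure_pmf X"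
    and Ss: "\<And>i. Ss i \<in> borel_measurable \<Omega>" "\<And>i. distr \<Omega> borel (Ss i) = Sd"
    using assms by (simp_all add: MXG1_input_def)
  have real_Xs: "(\<lambda>\<omega>. real (Xs j \<omega>)) \<in> borel_measurable \<Omega>" for j
    using measurable_compose[OF Xs(1), of real borel] by simp
  then show "(\<lambda>\<omega>. input_path A Xs Ss \<omega> c) \<in> borel_measurable \<Omega>"
    using distributed_exponentialD(1)[OF A] Ss(1)
    by (cases c rule: next_input.cases) (simp_all add: input_path_def)
  show "distr \<Omega> borel (\<lambda>\<omega>. input_path A Xs Ss \<omega> c) = input_law c"
  proof (cases c rule: next_input.cases)
    case (1 j)
    with distributed_exponentialD(2)[OF A] show ?thesis
      by (simp add: input_path_def input_law_def)
  next
    case (2 j)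
    have "distr \<Omega> borel (real \<circ> Xs j) = distr (distr \<Omega> (count_space UNIV) (Xs j)) borel real"
      by (rule distr_distr[symmetric]) (auto simp: Xs(1))
    with 2 Xs(2) show ?thesis
      by (simp add: input_path_def input_law_def comp_def)
  next
    case (3 i)
    with Ss(2) show ?thesis
      by (simp add: input_path_def input_law_def)
  qed
qed

lemma distr_input_path:
  assumes "MXG1_input \<Omega> lam X Sd A Xs Ss"
  shows "input_path A Xs Ss \<in> measurable \<Omega> path_space"
    and "distr \<Omega> path_space (input_path A Xs Ss) = path_law"
proof -
  interpret \<Omega>: prob_space \<Omega>
    using assms by (simp add: MXG1_input_def)
  show "input_path A Xs Ss \<in> measurable \<Omega> path_space"
    using input_path_coord(1)[OF assms] by (intro measurable_PiM_single') auto
  have "\<Omega>.indep_vars (\<lambda>_. borel) (\<lambda>c \<omega>. input_path A Xs Ss \<omega> c) UNIV"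
    using assms by (simp add: MXG1_input_def input_path_def)
  then have "distr \<Omega> path_space (\<lambda>\<omega>. \<lambda>c\<in>UNIV. input_path A Xs Ss \<omega> c) =
      PiM UNIV (\<lambda>c. distr \<Omega> borel (\<lambda>\<omega>. input_path A Xs Ss \<omega> c))"
    using \<Omega>.indep_vars_iff_distr_eq_PiM[where I=UNIV and M'="\<lambda>_. borel"
        and X="\<lambda>c \<omega>. input_path A Xs Ss \<omega> c"] input_path_coord(1)[OF assms]
    by simp
  then show "distr \<Omega> path_space (input_path A Xs Ss) = path_law"
    by (simp add: input_path_coord(2)[OF assms] path_law_def restrict_UNIV)
qed

lemma emeasure_M_rv:
  assumes "MXG1_input \<Omega> lam X Sd A Xs Ss"
  shows "emeasure \<Omega> {\<omega> \<in> space \<Omega>. M_rv A Xs Ss m \<omega> \<in> B} = emeasure path_law {z. path_max m z \<in> B}"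
proof -
  have "emeasure path_law {z. path_max m z \<in> B} =
      emeasure (distr \<Omega> path_space (input_path A Xs Ss)) {z. path_max m z \<in> B}"
    by (simp add: distr_input_path[OF assms])
  also have "\<dots> = emeasure \<Omega> {\<omega> \<in> space \<Omega>. M_rv A Xs Ss m \<omega> \<in> B}"
    using sets_path_max[of m B]
    by (subst emeasure_distr[OF distr_input_path(1)[OF assms]])
       (auto simp: sets_path_law M_rv_eq_path_max intro!: arg_cong[where f="emeasure \<Omega>"])
  finally show ?thesis ..
qed

lemma emeasure_distr_M_rv:
  assumes "MXG1_input \<Omega> lam X Sd A Xs Ss"
  shows "emeasure (distr \<Omega> (count_space UNIV) (M_rv A Xs Ss m)) B = emeasure path_law {z. path_max m z \<in> B}"
proof -
  have "M_rv A Xs Ss m \<in> measurable \<Omega> (count_space UNIV)"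
    using measurable_comp[OF distr_input_path(1)[OF assms] measurable_path_max]
    by (simp add: comp_def M_rv_eq_path_max[abs_def])
  with emeasure_M_rv[OF assms] show ?thesis
    by (simp add: emeasure_distr vimage_def Int_def conj_commute)
qed

lemma distr_exp_service_pair:
  assumes "prob_space N"
    and T_exp: "distributed N lborel T (exponential_density lam)"
    and "distr N borel S = Sd" and "prob_space.indep_var N borel T borel S"
  shows "distr N (borel \<Otimes>\<^sub>M borel) (\<lambda>\<omega>. (T \<omega>, S \<omega>)) = exp_law \<Otimes>\<^sub>M Sd"
proof -
  interpret N: prob_space N by fact
  have "distr N borel T \<Otimes>\<^sub>M distr N borel S = distr N (borel \<Otimes>\<^sub>M borel) (\<lambda>\<omega>. (T \<omega>, S \<omega>))"
    using assms(4) N.indep_var_distribution_eq by blast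
  with distributed_exponentialD(2)[OF T_exp] assms(3) show ?thesis
    by simp
qed

lemma emeasure_service_first:
  assumes "prob_space N"
    and T_exp: "distributed N lborel T (exponential_density lam)"
    and S_rv: "S \<in> borel_measurable N" and "distr N borel S = Sd"
    and "prob_space.indep_var N borel T borel S"
  shows "emeasure N {\<omega> \<in> space N. S \<omega> \<le> T \<omega>} = service_first_prob"
proof -
  interpret exp_law: prob_space exp_law by (rule prob_space_exp_law)
  interpret Sd: prob_space Sd by (rule Sd_prob)
  interpret pair_sigma_finite exp_law Sd by unfold_locales
  note joint = distr_exp_service_pair[OF assms(1,2,4,5)]
  note T_rv = distributed_exponentialD(1)[OF T_exp]
  define D where "D = {p :: real \<times> real. snd p \<le> fst p}"
  have D: "D \<in> sets (borel \<Otimes>\<^sub>M borel)"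
  proof -
    have "{p \<in> space (borel \<Otimes>\<^sub>M borel). snd p \<le> (fst p :: real)} \<in> sets (borel \<Otimes>\<^sub>M borel)"
      by measurable
    then show ?thesis
      by (simp add: D_def space_pair_measure)
  qed
  have sets_joint: "sets (exp_law \<Otimes>\<^sub>M Sd) = sets (borel \<Otimes>\<^sub>M borel)"
    by (rule sets_pair_measure_cong) (simp_all add: exp_law_def Sd_sets)
  have "emeasure N {\<omega> \<in> space N. S \<omega> \<le> T \<omega>} = emeasure (exp_law \<Otimes>\<^sub>M Sd) D"
    unfolding joint[symmetric] using D measurable_Pair[OF T_rv S_rv]
    by (subst emeasure_distr) (auto simp: D_def intro!: arg_cong[where f="emeasure N"])
  also have "\<dots> = (\<integral>\<^sup>+ s. \<integral>\<^sup>+ t. indicator D (t, s) \<partial>exp_law \<partial>Sd)"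
    using D by (simp add: sets_joint nn_integral_snd measurable_cong_sets[OF sets_joint refl]
        flip: nn_integral_indicator)
  also have "\<dots> = service_first_prob"
    unfolding service_first_prob_def
  proof (rule nn_integral_cong_AE, rule eventually_mono[OF S_nonneg])
    fix s :: real
    assume "0 \<le> s"
    have "(\<integral>\<^sup>+ t. indicator D (t, s) \<partial>exp_law) = (\<integral>\<^sup>+ t. indicator {s..} t * (\<lambda>_. 1) (t - s) \<partial>exp_law)"
      by (rule nn_integral_cong) (auto simp: D_def indicator_def)
    then show "(\<integral>\<^sup>+ t. indicator D (t, s) \<partial>exp_law) = ennreal (exp (- lam * s))"
      using nn_integral_exponential_memoryless[OF \<open>0 \<le> s\<close>, of "\<lambda>_. 1" lam]
      by (simp add: exp_law_def flip: exp_law_def) (simp add: exp_law.emeasure_space_1)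
  qed
  finally show ?thesis .
qed

lemma emeasure_first_event_indicator:
  fixes N :: "'v measure" and I :: "'v \<Rightarrow> nat"
  assumes "prob_space N"
    and T_exp: "distributed N lborel T (exponential_density lam)"
    and S_rv: "S \<in> borel_measurable N" and "distr N borel S = Sd"
    and "prob_space.indep_var N borel T borel S"
    and I_def: "\<And>\<omega>. I \<omega> = (if T \<omega> < S \<omega> then 1 else 0)"
  shows "emeasure N {\<omega> \<in> space N. I \<omega> = 0} = service_first_prob"
    and "emeasure N {\<omega> \<in> space N. I \<omega> = 1} = 1 - service_first_prob"
proof -
  interpret N: prob_space N by fact
  note distributed_exponentialD(1)[OF T_exp]
  then have sets: "{\<omega> \<in> space N. S \<omega> \<le> T \<omega>} \<in> sets N"
    using S_rv by measurable
  have "{\<omega> \<in> space N. I \<omega> = 0} = {\<omega> \<in> space N. S \<omega> \<le> T \<omega>}"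
    by (auto simp: I_def)
  with emeasure_service_first[OF assms(1-5)]
  show service: "emeasure N {\<omega> \<in> space N. I \<omega> = 0} = service_first_prob"
    by simp
  have "{\<omega> \<in> space N. I \<omega> = 1} = space N - {\<omega> \<in> space N. S \<omega> \<le> T \<omega>}"
    by (auto simp: I_def)
  moreover have "service_first_prob \<noteq> \<top>"
    using N.emeasure_finite[of "{\<omega> \<in> space N. I \<omega> = 0}"] by (simp add: service)
  ultimately show "emeasure N {\<omega> \<in> space N. I \<omega> = 1} = 1 - service_first_prob"
    using emeasure_compl[OF sets] emeasure_service_first[OF assms(1-5)]
    by (simp add: N.emeasure_space_1)
qed

lemma emeasure_distr_mixture:
  fixes N :: "'v measure" and I Xr :: "'v \<Rightarrow> nat" and Mk1 MkX :: "'v \<Rightarrow> enat"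
    and L :: "nat \<Rightarrow> enat set \<Rightarrow> ennreal"
  assumes N: "prob_space N"
    and T_exp: "distributed N lborel T (exponential_density lam)"
    and S_rv: "S \<in> borel_measurable N" and S_distr: "distr N borel S = Sd"
    and TS_indep: "prob_space.indep_var N borel T borel S"
    and I_def: "\<And>\<omega>. I \<omega> = (if T \<omega> < S \<omega> then 1 else 0)"
    and Xr_rv: "Xr \<in> measurable N (count_space UNIV)"
    and Mk1_rv: "Mk1 \<in> measurable N (count_space UNIV)"
    and MkX_rv: "MkX \<in> measurable N (count_space UNIV)"
    and MkX_law: "\<And>j B. emeasure N {\<omega> \<in> space N. Xr \<omega> = j \<and> MkX \<omega> \<in> B} = pmf X j * L (k + j) B"
    and Mk1_law: "\<And>B. emeasure N {\<omega> \<in> space N. Mk1 \<omega> \<in> B} = L (k - 1) B"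
    and indep_IXM: "prob_space.indep_vars N (\<lambda>_. count_space UNIV)
                      (\<lambda>c \<omega>. if c = (0::nat) then enat (I \<omega>)
                             else if c = 1 then enat (Xr \<omega>) else Mk1 \<omega>) {0, 1, 2}"
    and indep_MkX_I: "prob_space.indep_var N (count_space UNIV) MkX (count_space UNIV) I"
  shows "emeasure (distr N (count_space UNIV)
           (\<lambda>\<omega>. enat (I \<omega>) * MkX \<omega> + enat (1 - I \<omega>) * max (enat k) (Mk1 \<omega>))) B =
    (1 - service_first_prob) * (\<Sum>j. pmf X j * L (k + j) B)
    + service_first_prob * L (k - 1) {m. max (enat k) m \<in> B}"
proof -
  interpret N: prob_space N by (rule N)
  define B' where "B' = {m. max (enat k) m \<in> B}"
  note distributed_exponentialD(1)[OF T_exp]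
  then have [measurable]: "I \<in> measurable N (count_space UNIV)"
    using S_rv by (simp add: I_def[abs_def])
  note [measurable] = Mk1_rv MkX_rv
  have rhs: "enat (I \<omega>) * MkX \<omega> + enat (1 - I \<omega>) * max (enat k) (Mk1 \<omega>) =
      (if I \<omega> = 1 then MkX \<omega> else max (enat k) (Mk1 \<omega>))" for \<omega>
    using one_enat_def[symmetric] by (simp add: I_def zero_enat_def[symmetric])
  have "(\<lambda>\<omega>. if I \<omega> = 1 then MkX \<omega> else max (enat k) (Mk1 \<omega>)) -` B \<inter> space N =
      {\<omega> \<in> space N. I \<omega> = 1 \<and> MkX \<omega> \<in> B} \<union> {\<omega> \<in> space N. I \<omega> = 0 \<and> Mk1 \<omega> \<in> B'}"
    by (auto simp: I_def B'_def)
  then have "emeasure (distr N (count_space UNIV)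
        (\<lambda>\<omega>. enat (I \<omega>) * MkX \<omega> + enat (1 - I \<omega>) * max (enat k) (Mk1 \<omega>))) B =
      emeasure N {\<omega> \<in> space N. I \<omega> = 1 \<and> MkX \<omega> \<in> B} + emeasure N {\<omega> \<in> space N. I \<omega> = 0 \<and> Mk1 \<omega> \<in> B'}"
    unfolding rhs by (subst emeasure_distr, measurable) (auto intro!: plus_emeasure[symmetric])
  also have "emeasure N {\<omega> \<in> space N. I \<omega> = 1 \<and> MkX \<omega> \<in> B} =
      (1 - service_first_prob) * (\<Sum>j. pmf X j * L (k + j) B)"
    using N.emeasure_indep_var_Int[OF indep_MkX_I, of B "{1}"]
      emeasure_first_event_indicator(2)[OF assms(1-6)]
      emeasure_eq_suminf_fibers[OF Xr_rv MkX_rv, of B]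
    by (simp add: MkX_law conj_commute mult.commute enat_1_iff)
  also have "emeasure N {\<omega> \<in> space N. I \<omega> = 0 \<and> Mk1 \<omega> \<in> B'} = service_first_prob * L (k - 1) B'"
    using N.emeasure_indep_vars_Int[OF indep_IXM, of 0 2 "{0}" B']
      emeasure_first_event_indicator(1)[OF assms(1-6)]
    by (simp add: Mk1_law zero_enat_def)
  finally show ?thesis
    by (simp add: B'_def)
qed

end

theorem theorem3:
  fixes \<Omega> :: "'w measure" and N :: "'v measure"
    and lam :: real and X :: "nat pmf" and Sd :: "real measure"
    and A :: "nat \<Rightarrow> 'w \<Rightarrow> real" and Xs :: "nat \<Rightarrow> 'w \<Rightarrow> nat" and Ss :: "nat \<Rightarrow> 'w \<Rightarrow> real"
    and T S :: "'v \<Rightarrow> real" and I :: "'v \<Rightarrow> nat" and Xr :: "'v \<Rightarrow> nat"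
    and Mk1 MkX :: "'v \<Rightarrow> enat" and k :: nat
  assumes lam_pos: "lam > 0"
    and X_pos: "0 \<notin> set_pmf X"
    and X_mean: "integrable (measure_pmf X) real"
    and Sd_prob: "prob_space Sd" and Sd_sets: "sets Sd = sets borel"
    and S_nonneg: "AE s in Sd. s \<ge> 0"
    and stable: "(\<integral>s. exp (- lam * s) \<partial>Sd) >
                   measure_pmf.expectation X real / (measure_pmf.expectation X real + 1)"
    and input: "MXG1_input \<Omega> lam X Sd A Xs Ss"
    and k: "k \<ge> 1"
    \<comment> \<open>the auxiliary random variables on the right-hand side\<close>
    and N_prob: "prob_space N"
    and T_exp: "distributed N lborel T (exponential_density lam)"
    and S_rv: "S \<in> borel_measurable N" and S_distr: "distr N borel S = Sd"
    and TS_indep: "prob_space.indep_var N borel T borel S"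
    and I_def: "\<And>\<omega>. I \<omega> = (if T \<omega> < S \<omega> then 1 else 0)"
    and Xr_rv: "Xr \<in> measurable N (count_space UNIV)"
    and Xr_distr: "distr N (count_space UNIV) Xr = measure_pmf X"
    and Mk1_rv: "Mk1 \<in> measurable N (count_space UNIV)"
    and Mk1_distr: "distr N (count_space UNIV) Mk1 =
                    distr \<Omega> (count_space UNIV) (M_rv A Xs Ss (k - 1))"
    and MkX_rv: "MkX \<in> measurable N (count_space UNIV)"
    and MkX_cond: "\<And>j B. measure N {\<omega> \<in> space N. Xr \<omega> = j \<and> MkX \<omega> \<in> B} =
                    pmf X j * measure \<Omega> {\<omega> \<in> space \<Omega>. M_rv A Xs Ss (k + j) \<omega> \<in> B}"
    and indep_IXM: "prob_space.indep_vars N (\<lambda>_. count_space UNIV)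
                      (\<lambda>c \<omega>. if c = (0::nat) then enat (I \<omega>)
                             else if c = 1 then enat (Xr \<omega>) else Mk1 \<omega>) {0, 1, 2}"
    and indep_MkX_I: "prob_space.indep_var N (count_space UNIV) MkX (count_space UNIV) I"
    and indep_MkX_Mk1: "prob_space.indep_var N (count_space UNIV) MkX (count_space UNIV) Mk1"
  shows "distr \<Omega> (count_space UNIV) (M_rv A Xs Ss k) =
         distr N (count_space UNIV)
           (\<lambda>\<omega>. enat (I \<omega>) * MkX \<omega> + enat (1 - I \<omega>) * max (enat k) (Mk1 \<omega>))"
proof -
  interpret MXG1_law lam X Sd
    using lam_pos Sd_prob Sd_sets S_nonneg by (simp add: MXG1_law_def)
  interpret \<Omega>: prob_space \<Omega>
    using input by (simp add: MXG1_input_def)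
  interpret N: prob_space N
    by (rule N_prob)
  let ?L = "\<lambda>m B. emeasure path_law {z. path_max m z \<in> B}"
  have MkX_law: "emeasure N {\<omega> \<in> space N. Xr \<omega> = j \<and> MkX \<omega> \<in> B} = pmf X j * ?L (k + j) B" for j B
    using MkX_cond[of j B] emeasure_M_rv[OF input, of "k + j" B]
    by (simp add: N.emeasure_eq_measure \<Omega>.emeasure_eq_measure ennreal_mult)
  have Mk1_law: "emeasure N {\<omega> \<in> space N. Mk1 \<omega> \<in> B} = ?L (k - 1) B" for B
    using emeasure_distr[OF Mk1_rv, of B] emeasure_distr_M_rv[OF input, of "k - 1" B]
    by (simp add: Mk1_distr vimage_def Int_def conj_commute)
  show ?thesis
  proof (rule measure_eqI)
    fix B :: "enat set"
    show "emeasure (distr \<Omega> (count_space UNIV) (M_rv A Xs Ss k)) B =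
        emeasure (distr N (count_space UNIV)
          (\<lambda>\<omega>. enat (I \<omega>) * MkX \<omega> + enat (1 - I \<omega>) * max (enat k) (Mk1 \<omega>))) B"
      unfolding emeasure_distr_M_rv[OF input] path_max_law_recursion[OF k]
      by (rule emeasure_distr_mixture[OF N_prob T_exp S_rv S_distr TS_indep I_def
            Xr_rv Mk1_rv MkX_rv MkX_law Mk1_law indep_IXM indep_MkX_I, symmetric])
  qed simp
qed

end
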